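(* Let $M,K,N\in\mathbb{N}$ with $K\le M+1$, let $w_1,w_2\in\mathbb{N}$ with $\frac{2\pi}{w_2}\le\frac{2\pi}{w_1}$, let $f_1:\mathbb{R}\to\mathbb{R}$ be continuous and periodic with cycle length $\frac{2\pi}{w_1}$, let $\tau=\frac{2\pi}{w_2(M+1)}$, and let $T\subset[0,\frac{2\pi}{w_1}]$ be a set of $N$ times such that $X=\{(f_1(t),f_1(t+\tau),\dots,f_1(t+M\tau))^T:t\in T\}$ consists of $N$ points. Regard $X$ as an $N\times(M+1)$ matrix whose rows are these points, let $\lambda_1\ge\lambda_2\ge\dots\ge\lambda_N\ge0$ be the eigenvalues of $XX^T$ (with $\lambda_i=0$ for $i>M+1$), and let $\phi(X)\subset\mathbb{R}^K$ be the point cloud obtained by orthogonally projecting each point of $X$ onto its top $K$ principal components, i.e. the rows of $XV_K$ where $V_K$ consists of top $K$ right singular vectors of $X$. Let $\mathrm{score}(f_1|f_2)=\mathrm{mp}(\mathrm{dgm}_1(X))/\sqrt3$ and $\mathrm{score}_\phi(f_1|f_2)=\mathrm{mp}(\mathrm{dgm}_1(\phi(X)))/\sqrt3$. Then \[|\mathrm{score}(f_1|f_2)-\mathrm{score}_\phi(f_1|f_2)|\le\sqrt{\tfrac83}\,\Big(\sum_{i=K+1}^N\lambda_i^2\Big)^{1/4}.\]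
   Context: $\mathrm{dgm}_1(Y)$ denotes the 1-dimensional persistence diagram of the Vietoris–Rips filtration of a finite Euclidean point cloud $Y$, and $\mathrm{mp}(\cdot)$ the largest persistence (death minus birth) among its points. In the paper $\frac{2\pi}{w_2}$ is the cycle length of a more periodic time series $f_2$, $X$ is the conditional sliding windows embedding of $f_1$ given $f_2$, and the quotients are the conditional periodicity score and its PCA version. *)

theory Defs
  imports Complex_Main "Jordan_Normal_Form.Matrix" "Jordan_Normal_Form.Char_Poly"
begin

definition eucl_dist :: "real vec \<Rightarrow> real vec \<Rightarrow> real" where
  "eucl_dist u v = sqrt (\<Sum>i<dim_vec u. (u $ i - v $ i)^2)"

(* Vietoris-Rips complex of the finite point cloud S at scale r (diameter convention):
   a simplex is a nonempty finite subset of S of diameter \<le> r. *)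
definition vr_edges :: "('a \<Rightarrow> 'a \<Rightarrow> real) \<Rightarrow> 'a set \<Rightarrow> real \<Rightarrow> 'a set set" where
  "vr_edges d S r = {e. e \<subseteq> S \<and> card e = 2 \<and> (\<forall>x\<in>e. \<forall>y\<in>e. d x y \<le> r)}"

definition vr_triangles :: "('a \<Rightarrow> 'a \<Rightarrow> real) \<Rightarrow> 'a set \<Rightarrow> real \<Rightarrow> 'a set set" where
  "vr_triangles d S r = {t. t \<subseteq> S \<and> card t = 3 \<and> (\<forall>x\<in>t. \<forall>y\<in>t. d x y \<le> r)}"

(* 1-chains with Z/2 coefficients are finite sets of edges; a 1-cycle is one with
   zero boundary, i.e. every vertex lies on an even number of its edges *)
definition is_1cycle :: "'a set set \<Rightarrow> bool" where
  "is_1cycle z \<longleftrightarrow> finite z \<and> (\<forall>v. even (card {e\<in>z. v \<in> e}))"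

(* 1-boundaries of VR_r(S) over Z/2: sums of boundaries of 2-simplices *)
definition is_1boundary :: "('a \<Rightarrow> 'a \<Rightarrow> real) \<Rightarrow> 'a set \<Rightarrow> real \<Rightarrow> 'a set set \<Rightarrow> bool" where
  "is_1boundary d S r z \<longleftrightarrow>
     (\<exists>Ts \<subseteq> vr_triangles d S r. finite Ts \<and>
        z = {e. card e = 2 \<and> odd (card {t\<in>Ts. e \<subseteq> t})})"

(* rank of H_1(VR_a(S)) \<rightarrow> H_1(VR_b(S)) (coefficients Z/2) is positive *)
definition h1_rank_pos :: "('a \<Rightarrow> 'a \<Rightarrow> real) \<Rightarrow> 'a set \<Rightarrow> real \<Rightarrow> real \<Rightarrow> bool" where
  "h1_rank_pos d S a b \<longleftrightarrow>
     (\<exists>z. z \<subseteq> vr_edges d S a \<and> is_1cycle z \<and> \<not> is_1boundary d S b z)"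

(* mp(dgm_1(VR(S))): largest persistence of a point of the 1-dimensional persistence
   diagram, expressed through the rank invariant (0 if the diagram is empty) *)
definition max_pers1 :: "('a \<Rightarrow> 'a \<Rightarrow> real) \<Rightarrow> 'a set \<Rightarrow> real" where
  "max_pers1 d S = Sup ({b - a | a b. 0 \<le> a \<and> a \<le> b \<and> h1_rank_pos d S a b} \<union> {0})"

definition sorted_eigenvalues :: "real mat \<Rightarrow> real list \<Rightarrow> bool" where
  "sorted_eigenvalues A ls \<longleftrightarrow>
     length ls = dim_row A \<and> sorted_wrt (\<ge>) ls \<and> char_poly A = (\<Prod>a\<leftarrow>ls. [:- a, 1:])"

definition top_right_singular_vectors :: "real mat \<Rightarrow> nat \<Rightarrow> real mat \<Rightarrow> bool" where
  "top_right_singular_vectors X K V \<longleftrightarrow>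
     V \<in> carrier_mat (dim_col X) K \<and> transpose_mat V * V = 1\<^sub>m K \<and>
     (\<exists>mus. sorted_eigenvalues (transpose_mat X * X) mus \<and>
        (\<forall>j<K. (transpose_mat X * X) *\<^sub>v col V j = mus ! j \<cdot>\<^sub>v col V j))"

definition row_cloud :: "real mat \<Rightarrow> real vec set" where
  "row_cloud X = {row X i | i. i < dim_row X}"

end

theory Submission
  imports Defs "Jordan_Normal_Form.Schur_Decomposition"
begin

(* Projecting onto the top K principal components changes the Gram matrix X X^T by a
   matrix whose squared Frobenius norm is at most the sum of the squared eigenvalues
   lambda_i, i > K. Squared distances are linear in the Gram matrix, so every pairwise
   distance changes by at most eps = sqrt 2 * (sum_{i>K} lambda_i^2)^(1/4), i.e. the
   projection is a surjection of point clouds with distortion eps. Vietoris-Rips persistence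
   is stable under such maps: the projection and a section of it carry cycles forward and
   boundaries back with a shift of eps in scale, the composite being joined to the identity
   by a prism, so the maximal persistence moves by at most 2 eps. *)

section \<open>Vietoris-Rips complexes and formal chains\<close>

definition vr_simplex :: "('a \<Rightarrow> 'a \<Rightarrow> real) \<Rightarrow> 'a set \<Rightarrow> real \<Rightarrow> 'a set \<Rightarrow> bool" where
  "vr_simplex d S r A \<longleftrightarrow> A \<subseteq> S \<and> (\<forall>x\<in>A. \<forall>y\<in>A. d x y \<le> r)"

lemma vr_edges_eq: "vr_edges d S r = {e. vr_simplex d S r e \<and> card e = 2}"
  by (auto simp: vr_edges_def vr_simplex_def)

lemma vr_triangles_eq: "vr_triangles d S r = {t. vr_simplex d S r t \<and> card t = 3}"
  by (auto simp: vr_triangles_def vr_simplex_def)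

lemma vr_simplex_image:
  assumes "vr_simplex d S r A" "f ` S \<subseteq> S'" "\<forall>x\<in>S. \<forall>y\<in>S. d' (f x) (f y) \<le> d x y + \<epsilon>"
  shows "vr_simplex d' S' (r + \<epsilon>) (f ` A)"
  unfolding vr_simplex_def
proof (intro conjI ballI)
  show "f ` A \<subseteq> S'" using assms unfolding vr_simplex_def by blast
  fix u w assume "u \<in> f ` A" "w \<in> f ` A"
  then obtain x y where "x \<in> A" "y \<in> A" "u = f x" "w = f y" by blast
  then have "d' u w \<le> d x y + \<epsilon>" using assms unfolding vr_simplex_def by blast
  moreover have "d x y \<le> r" using assms(1) \<open>x \<in> A\<close> \<open>y \<in> A\<close> unfolding vr_simplex_def by blast
  ultimately show "d' u w \<le> r + \<epsilon>" by linarith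
qed

lemma vr_simplex_mono: "vr_simplex d S r A \<Longrightarrow> r \<le> r' \<Longrightarrow> vr_simplex d S r' A"
  unfolding vr_simplex_def by (meson order.trans)

definition edge_set :: "'a \<times> 'a \<Rightarrow> 'a set" where
  "edge_set = (\<lambda>(x, y). {x, y})"

definition triangle_set :: "'a \<times> 'a \<times> 'a \<Rightarrow> 'a set" where
  "triangle_set = (\<lambda>(x, y, z). {x, y, z})"

lemma edge_set_simp [simp]: "edge_set (x, y) = {x, y}"
  by (simp add: edge_set_def)

lemma triangle_set_simp [simp]: "triangle_set (x, y, z) = {x, y, z}"
  by (simp add: triangle_set_def)

lemma edge_set_map_prod: "edge_set (map_prod f f p) = f ` edge_set p"
  by (cases p) auto

lemma triangle_set_map_prod: "triangle_set (map_prod f (map_prod f f) p) = f ` triangle_set p"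
  by (cases p) auto

text \<open>Formal 1- and 2-chains are multisets of ordered edges and triangles; they are read
  modulo 2 by keeping the nondegenerate simplices of odd multiplicity. Ordered tuples make
  images of chains under arbitrary vertex maps immediate.\<close>

definition chain_of :: "('a \<times> 'a) multiset \<Rightarrow> 'a set set" where
  "chain_of E = {e. card e = 2 \<and> odd (count (image_mset edge_set E) e)}"

definition triangles_of :: "('a \<times> 'a \<times> 'a) multiset \<Rightarrow> 'a set set" where
  "triangles_of T = {t. card t = 3 \<and> odd (count (image_mset triangle_set T) t)}"

definition endpoints :: "('a \<times> 'a) multiset \<Rightarrow> 'a multiset" where
  "endpoints E = image_mset fst E + image_mset snd E"

definition formal_cycle :: "('a \<times> 'a) multiset \<Rightarrow> bool" where
  "formal_cycle E \<longleftrightarrow> (\<forall>v. even (count (endpoints E) v))"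

definition triangle_boundary :: "'a \<times> 'a \<times> 'a \<Rightarrow> ('a \<times> 'a) multiset" where
  "triangle_boundary = (\<lambda>(x, y, z). {#(x, y), (y, z), (x, z)#})"

definition formal_boundary :: "('a \<times> 'a \<times> 'a) multiset \<Rightarrow> ('a \<times> 'a) multiset" where
  "formal_boundary T = \<Sum>\<^sub># (image_mset triangle_boundary T)"

lemma triangle_boundary_simp [simp]: "triangle_boundary (x, y, z) = {#(x, y), (y, z), (x, z)#}"
  by (simp add: triangle_boundary_def)

lemma formal_boundary_empty [simp]: "formal_boundary {#} = {#}"
  and formal_boundary_add_mset [simp]:
    "formal_boundary (add_mset t T) = triangle_boundary t + formal_boundary T"
  and formal_boundary_plus [simp]: "formal_boundary (T + U) = formal_boundary T + formal_boundary U"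
  by (simp_all add: formal_boundary_def)

lemma formal_boundary_image:
  "formal_boundary (image_mset (map_prod f (map_prod f f)) T) = image_mset (map_prod f f) (formal_boundary T)"
  by (induction T) auto

lemma endpoints_simps [simp]:
  "endpoints {#} = {#}" "endpoints (add_mset (x, y) E) = add_mset x (add_mset y (endpoints E))"
  "endpoints (E + F) = endpoints E + endpoints F"
  by (simp_all add: endpoints_def)

lemma endpoints_image: "endpoints (image_mset (map_prod f f) E) = image_mset f (endpoints E)"
  by (simp add: endpoints_def multiset.map_comp comp_def)

lemma in_set_mset_of_odd_count: "odd (count M x) \<Longrightarrow> x \<in># M"
  by (metis count_eq_zero_iff even_zero)

lemma finite_chain_of: "finite (chain_of E)"
  by (rule finite_subset[of _ "set_mset (image_mset edge_set E)"])
     (auto simp: chain_of_def dest: in_set_mset_of_odd_count)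

lemma finite_triangles_of: "finite (triangles_of T)"
  by (rule finite_subset[of _ "set_mset (image_mset triangle_set T)"])
     (auto simp: triangles_of_def dest: in_set_mset_of_odd_count)

lemma chain_of_plus: "chain_of (E + F) = sym_diff (chain_of E) (chain_of F)"
  by (auto simp: chain_of_def)

lemma chain_of_add_mset:
  "chain_of (add_mset (x, y) E) = (if x = y then chain_of E else sym_diff (chain_of E) {{x, y}})"
  by (auto simp: chain_of_def)

lemma chain_of_empty_if_even: "(\<And>e. even (count (image_mset edge_set E) e)) \<Longrightarrow> chain_of E = {}"
  by (auto simp: chain_of_def)

lemma chain_of_double [simp]: "chain_of (E + E) = {}"
  by (rule chain_of_empty_if_even) simp

lemma even_count_image_mset: "(\<And>x. even (count M x)) \<Longrightarrow> even (count (image_mset f M) y)"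
  unfolding count_image_mset by (intro dvd_sum) auto

text \<open>The edges swept out by the vertices of a cycle under a cone or a prism cancel
  modulo 2.\<close>

lemma chain_of_image_endpoints:
  "formal_cycle E \<Longrightarrow> chain_of (image_mset \<phi> (endpoints E)) = {}"
  unfolding formal_cycle_def
  by (rule chain_of_empty_if_even) (simp add: multiset.map_comp even_count_image_mset)

lemma chain_of_image_empty:
  assumes "chain_of E = {}"
  shows "chain_of (image_mset (map_prod f f) E) = {}"
proof -
  define M where "M = image_mset edge_set E"
  have "even (count M e)" if "e \<in># M" "card (f ` e) = 2" for e
  proof -
    obtain p where "e = edge_set p" using \<open>e \<in># M\<close> unfolding M_def by auto
    then have "finite e" "card e \<le> 2" by (cases p; simp add: card_insert_le_m1)+
    then have "card e = 2" using \<open>card (f ` e) = 2\<close> card_image_le[of e f] by linarith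
    then show ?thesis using assms unfolding chain_of_def M_def by auto
  qed
  then have "even (count (image_mset ((`) f) M) e')" if "card e' = 2" for e'
    unfolding count_image_mset using that by (intro dvd_sum) auto
  moreover have "image_mset edge_set (image_mset (map_prod f f) E) = image_mset ((`) f) M"
    unfolding M_def by (simp add: multiset.map_comp comp_def edge_set_map_prod)
  ultimately show ?thesis by (auto simp: chain_of_def)
qed

lemma chain_of_image_cong:
  assumes "chain_of E = chain_of F"
  shows "chain_of (image_mset (map_prod f f) E) = chain_of (image_mset (map_prod f f) F)"
proof -
  have "chain_of (image_mset (map_prod f f) (E + F)) = {}"
    by (rule chain_of_image_empty) (simp add: chain_of_plus assms)
  then show ?thesis by (auto simp: chain_of_plus)
qed

lemma formal_cycle_image: "formal_cycle E \<Longrightarrow> formal_cycle (image_mset (map_prod f f) E)"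
  unfolding formal_cycle_def endpoints_image by (blast intro: even_count_image_mset)

lemma even_card_sym_diff_singleton:
  assumes "finite A"
  shows "even (card (sym_diff A {t})) \<longleftrightarrow> odd (card A)"
proof (cases "t \<in> A")
  case True
  then have "sym_diff A {t} = A - {t}" by blast
  then show ?thesis using card_Suc_Diff1[OF assms True] by (metis even_Suc)
next
  case False
  then have "sym_diff A {t} = insert t A" by blast
  then show ?thesis using False assms by simp
qed

lemma even_card_filter_sym_diff_singleton:
  assumes "finite A"
  shows "even (card {e \<in> sym_diff A {s}. P e}) \<longleftrightarrow> (even (card {e \<in> A. P e}) \<longleftrightarrow> \<not> P s)"
proof -
  have "{e \<in> sym_diff A {s}. P e} = (if P s then sym_diff {e \<in> A. P e} {s} else {e \<in> A. P e})"
    by auto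
  then show ?thesis using even_card_sym_diff_singleton[of "{e \<in> A. P e}" s] assms by simp
qed

lemma even_degree_chain_of_iff:
  "even (card {e \<in> chain_of E. v \<in> e}) \<longleftrightarrow> even (count (endpoints E) v)"
proof (induction E)
  case empty
  then show ?case by (simp add: chain_of_def)
next
  case (add p E)
  obtain x y where p: "p = (x, y)" by (cases p)
  show ?case
  proof (cases "x = y")
    case True
    then show ?thesis using add.IH by (simp add: p chain_of_add_mset)
  next
    case False
    then have chain: "chain_of (add_mset p E) = sym_diff (chain_of E) {{x, y}}"
      by (simp add: p chain_of_add_mset)
    have "even (card {e \<in> chain_of (add_mset p E). v \<in> e}) \<longleftrightarrow>
        (even (card {e \<in> chain_of E. v \<in> e}) \<longleftrightarrow> v \<notin> {x, y})"
      unfolding chain by (rule even_card_filter_sym_diff_singleton[OF finite_chain_of])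
    then show ?thesis using add.IH False by (auto simp: p)
  qed
qed

lemma is_1cycle_chain_of_iff: "is_1cycle (chain_of E) \<longleftrightarrow> formal_cycle E"
  by (simp add: is_1cycle_def formal_cycle_def finite_chain_of even_degree_chain_of_iff)

lemma triangles_of_add_mset:
  "triangles_of (add_mset t T) =
     (if card (triangle_set t) = 3 then sym_diff (triangles_of T) {triangle_set t} else triangles_of T)"
  by (auto simp: triangles_of_def)

lemma even_count_triangle_boundary:
  assumes "card e = 2"
  shows "even (count (image_mset edge_set (triangle_boundary t)) e) \<longleftrightarrow>
           \<not> (card (triangle_set t) = 3 \<and> e \<subseteq> triangle_set t)"
proof -
  obtain a b where "a \<noteq> b" "e = {a, b}" using assms by (meson card_2_iff)
  moreover obtain x y z where "t = (x, y, z)" by (cases t)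
  ultimately show ?thesis
    by (cases "x = y"; cases "y = z"; cases "x = z") (auto simp: doubleton_eq_iff card_insert_if)
qed

lemma chain_of_formal_boundary:
  "chain_of (formal_boundary T) = {e. card e = 2 \<and> odd (card {t \<in> triangles_of T. e \<subseteq> t})}"
proof -
  have "even (count (image_mset edge_set (formal_boundary T)) e) \<longleftrightarrow>
          even (card {t \<in> triangles_of T. e \<subseteq> t})" if "card e = 2" for e
  proof (induction T)
    case empty
    then show ?case by (simp add: triangles_of_def)
  next
    case (add t T)
    note new_face = even_count_triangle_boundary[OF \<open>card e = 2\<close>, of t]
    show ?case
    proof (cases "card (triangle_set t) = 3")
      case True
      then have faces: "triangles_of (add_mset t T) = sym_diff (triangles_of T) {triangle_set t}"
        by (simp add: triangles_of_add_mset)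
      have "even (card {s \<in> triangles_of (add_mset t T). e \<subseteq> s}) \<longleftrightarrow>
          (even (card {s \<in> triangles_of T. e \<subseteq> s}) \<longleftrightarrow> \<not> e \<subseteq> triangle_set t)"
        unfolding faces by (rule even_card_filter_sym_diff_singleton[OF finite_triangles_of])
      then show ?thesis using add.IH True new_face by auto
    next
      case False
      then show ?thesis using add.IH new_face by (simp add: triangles_of_add_mset)
    qed
  qed
  then show ?thesis unfolding chain_of_def by blast
qed

lemma ex_mset_image_eq_mset_set:
  assumes "finite Z" "Z \<subseteq> range g"
  shows "\<exists>M. image_mset g M = mset_set Z"
proof
  have "image_mset g (image_mset (inv_into UNIV g) (mset_set Z)) = image_mset id (mset_set Z)"
    unfolding multiset.map_comp using assms by (intro image_mset_cong) (auto simp: f_inv_into_f)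
  then show "image_mset g (image_mset (inv_into UNIV g) (mset_set Z)) = mset_set Z" by simp
qed

lemma range_edge_set: "card e = 2 \<Longrightarrow> e \<in> range edge_set"
  by (metis card_2_iff edge_set_simp rangeI)

lemma range_triangle_set: "card t = 3 \<Longrightarrow> t \<in> range triangle_set"
  by (metis card_3_iff triangle_set_simp rangeI)

lemma vr_cycle_chain_of:
  assumes "formal_cycle E" "\<forall>p\<in>#E. vr_simplex d S a (edge_set p)"
  shows "chain_of E \<subseteq> vr_edges d S a" "is_1cycle (chain_of E)"
proof -
  show "chain_of E \<subseteq> vr_edges d S a"
    using assms(2) by (auto simp: vr_edges_eq chain_of_def dest!: in_set_mset_of_odd_count)
  show "is_1cycle (chain_of E)" using assms(1) by (simp add: is_1cycle_chain_of_iff)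
qed

lemma vr_cycle_obtain_formal:
  assumes "z \<subseteq> vr_edges d S a" "is_1cycle z"
  obtains E where "formal_cycle E" "chain_of E = z" "\<forall>p\<in>#E. vr_simplex d S a (edge_set p)"
proof -
  have "z \<subseteq> range edge_set"
    using assms(1) range_edge_set by (auto simp: vr_edges_eq)
  then obtain E where E: "image_mset edge_set E = mset_set z"
    using ex_mset_image_eq_mset_set assms(2) unfolding is_1cycle_def by blast
  have fin: "finite z" using assms(2) by (simp add: is_1cycle_def)
  then have "chain_of E = z"
    using assms(1) by (auto simp: chain_of_def E count_mset_set' vr_edges_eq split: if_splits)
  moreover have "\<forall>p\<in>#E. vr_simplex d S a (edge_set p)"
  proof
    fix p assume "p \<in># E"
    then have "edge_set p \<in># mset_set z" unfolding E[symmetric] by simp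
    then show "vr_simplex d S a (edge_set p)" using fin assms(1) by (auto simp: vr_edges_eq)
  qed
  ultimately show ?thesis using that assms(2) is_1cycle_chain_of_iff by metis
qed

lemma is_1boundary_iff_formal:
  "is_1boundary d S r z \<longleftrightarrow>
     (\<exists>T. (\<forall>t\<in>#T. vr_simplex d S r (triangle_set t)) \<and> z = chain_of (formal_boundary T))"
proof
  assume "is_1boundary d S r z"
  then obtain Ts where Ts: "Ts \<subseteq> vr_triangles d S r" "finite Ts"
    and z: "z = {e. card e = 2 \<and> odd (card {t \<in> Ts. e \<subseteq> t})}"
    unfolding is_1boundary_def by blast
  have "Ts \<subseteq> range triangle_set"
    using Ts(1) range_triangle_set by (auto simp: vr_triangles_eq)
  then obtain T where T: "image_mset triangle_set T = mset_set Ts"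
    using ex_mset_image_eq_mset_set Ts(2) by blast
  have "triangles_of T = Ts"
    using Ts by (auto simp: triangles_of_def T count_mset_set' vr_triangles_eq split: if_splits)
  moreover have "\<forall>t\<in>#T. vr_simplex d S r (triangle_set t)"
  proof
    fix t assume "t \<in># T"
    then have "triangle_set t \<in># mset_set Ts" unfolding T[symmetric] by simp
    then show "vr_simplex d S r (triangle_set t)" using Ts by (auto simp: vr_triangles_eq)
  qed
  ultimately show "\<exists>T. (\<forall>t\<in>#T. vr_simplex d S r (triangle_set t)) \<and> z = chain_of (formal_boundary T)"
    using z chain_of_formal_boundary by blast
next
  assume "\<exists>T. (\<forall>t\<in>#T. vr_simplex d S r (triangle_set t)) \<and> z = chain_of (formal_boundary T)"
  then obtain T where T: "\<forall>t\<in>#T. vr_simplex d S r (triangle_set t)"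
    and z: "z = chain_of (formal_boundary T)" by blast
  have "triangles_of T \<subseteq> vr_triangles d S r"
    using T by (auto simp: triangles_of_def vr_triangles_eq dest!: in_set_mset_of_odd_count)
  then show "is_1boundary d S r z"
    unfolding is_1boundary_def z chain_of_formal_boundary using finite_triangles_of by blast
qed

lemma is_1boundary_sym_diff:
  assumes "is_1boundary d S r z" "is_1boundary d S r z'"
  shows "is_1boundary d S r (sym_diff z z')"
proof -
  obtain T T' where "\<forall>t\<in>#T. vr_simplex d S r (triangle_set t)" "z = chain_of (formal_boundary T)"
    "\<forall>t\<in>#T'. vr_simplex d S r (triangle_set t)" "z' = chain_of (formal_boundary T')"
    using assms unfolding is_1boundary_iff_formal by blast
  then show ?thesis unfolding is_1boundary_iff_formal
    by (intro exI[of _ "T + T'"]) (auto simp: chain_of_plus)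
qed

lemma vr_cycle_image:
  assumes "formal_cycle E" "\<forall>p\<in>#E. vr_simplex d S a (edge_set p)"
    and "f ` S \<subseteq> S'" "\<forall>x\<in>S. \<forall>y\<in>S. d' (f x) (f y) \<le> d x y + \<epsilon>"
  shows "formal_cycle (image_mset (map_prod f f) E)"
    "\<forall>p\<in>#image_mset (map_prod f f) E. vr_simplex d' S' (a + \<epsilon>) (edge_set p)"
proof -
  show "formal_cycle (image_mset (map_prod f f) E)" using assms(1) by (rule formal_cycle_image)
  have "vr_simplex d' S' (a + \<epsilon>) (edge_set (map_prod f f p))" if "p \<in># E" for p
    unfolding edge_set_map_prod using vr_simplex_image[OF _ assms(3,4)] assms(2) that by blast
  then show "\<forall>p\<in>#image_mset (map_prod f f) E. vr_simplex d' S' (a + \<epsilon>) (edge_set p)" by auto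
qed

lemma is_1boundary_image:
  assumes "is_1boundary d S r (chain_of E)"
    and "f ` S \<subseteq> S'" "\<forall>x\<in>S. \<forall>y\<in>S. d' (f x) (f y) \<le> d x y + \<epsilon>"
  shows "is_1boundary d' S' (r + \<epsilon>) (chain_of (image_mset (map_prod f f) E))"
proof -
  obtain T where T: "\<forall>t\<in>#T. vr_simplex d S r (triangle_set t)"
    and E: "chain_of E = chain_of (formal_boundary T)"
    using assms(1) unfolding is_1boundary_iff_formal by blast
  let ?T' = "image_mset (map_prod f (map_prod f f)) T"
  have "vr_simplex d' S' (r + \<epsilon>) (triangle_set (map_prod f (map_prod f f) t))" if "t \<in># T" for t
    unfolding triangle_set_map_prod using vr_simplex_image[OF _ assms(2,3)] T that by blast
  then have "\<forall>t\<in>#?T'. vr_simplex d' S' (r + \<epsilon>) (triangle_set t)" by auto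
  moreover have "chain_of (image_mset (map_prod f f) E) = chain_of (formal_boundary ?T')"
    unfolding formal_boundary_image using E by (rule chain_of_image_cong)
  ultimately show ?thesis unfolding is_1boundary_iff_formal by blast
qed

definition cone :: "'a \<Rightarrow> ('a \<times> 'a) multiset \<Rightarrow> ('a \<times> 'a \<times> 'a) multiset" where
  "cone v E = image_mset (\<lambda>(x, y). (v, x, y)) E"

definition prism :: "('a \<Rightarrow> 'a) \<Rightarrow> ('a \<times> 'a) multiset \<Rightarrow> ('a \<times> 'a \<times> 'a) multiset" where
  "prism h E = \<Sum>\<^sub># (image_mset (\<lambda>(x, y). {#(x, y, h y), (x, h x, h y)#}) E)"

lemma formal_boundary_cone:
  "formal_boundary (cone v E) = E + image_mset (Pair v) (endpoints E)"
proof (induction E)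
  case (add p E)
  then show ?case by (cases p) (auto simp: cone_def intro: multiset_eqI)
qed (simp add: cone_def)

lemma formal_boundary_prism:
  "formal_boundary (prism h E) =
     E + image_mset (map_prod h h) E + image_mset (\<lambda>v. (v, h v)) (endpoints E)
     + (image_mset (\<lambda>(x, y). (x, h y)) E + image_mset (\<lambda>(x, y). (x, h y)) E)"
proof (induction E)
  case (add p E)
  then show ?case by (cases p) (auto simp: prism_def intro: multiset_eqI)
qed (simp add: prism_def)

lemma chain_of_cone: "formal_cycle E \<Longrightarrow> chain_of (formal_boundary (cone v E)) = chain_of E"
  by (simp add: formal_boundary_cone chain_of_plus chain_of_image_endpoints)

lemma chain_of_prism:
  "formal_cycle E \<Longrightarrow>
     chain_of (formal_boundary (prism h E)) = sym_diff (chain_of E) (chain_of (image_mset (map_prod h h) E))"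
  by (simp add: formal_boundary_prism chain_of_plus chain_of_image_endpoints)

section \<open>Stability of the maximal persistence\<close>

lemma is_1boundary_if_diameter_le:
  assumes "z \<subseteq> vr_edges d S a" "is_1cycle z" "\<forall>u\<in>S. \<forall>w\<in>S. d u w \<le> r"
  shows "is_1boundary d S r z"
proof -
  obtain E where E: "formal_cycle E" "chain_of E = z" "\<forall>p\<in>#E. vr_simplex d S a (edge_set p)"
    using vr_cycle_obtain_formal[OF assms(1,2)] .
  define v where "v = (SOME v. v \<in> S)"
  have "vr_simplex d S r (triangle_set t)" if "t \<in># cone v E" for t
  proof -
    obtain x y where "(x, y) \<in># E" "t = (v, x, y)" using \<open>t \<in># cone v E\<close> by (auto simp: cone_def)
    moreover from this have "x \<in> S" "y \<in> S" using E(3) by (auto simp: vr_simplex_def)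
    moreover from this have "v \<in> S" unfolding v_def by (meson someI)
    ultimately show ?thesis using assms(3) by (simp add: vr_simplex_def)
  qed
  then show ?thesis unfolding is_1boundary_iff_formal
    using chain_of_cone[OF E(1)] E(2) by blast
qed

lemma h1_rank_pos_lt_diameter:
  assumes "h1_rank_pos d S a b" "\<forall>u\<in>S. \<forall>w\<in>S. d u w \<le> D"
  shows "b < D"
proof (rule ccontr)
  assume "\<not> b < D"
  then have "\<forall>u\<in>S. \<forall>w\<in>S. d u w \<le> b" using assms(2) by force
  then show False using assms(1) is_1boundary_if_diameter_le unfolding h1_rank_pos_def by blast
qed

lemma vr_simplex_prism:
  assumes "\<forall>p\<in>#E. vr_simplex d S a (edge_set p)" "h ` S \<subseteq> S" "0 \<le> c"
    and "\<forall>x\<in>S. \<forall>y\<in>S. d x (h y) \<le> d x y + c \<and> d (h x) y \<le> d x y + c \<and> d (h x) (h y) \<le> d x y + c"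
  shows "\<forall>t\<in>#prism h E. vr_simplex d S (a + c) (triangle_set t)"
proof
  fix t assume "t \<in># prism h E"
  then obtain x y where xy: "(x, y) \<in># E" and t: "t = (x, y, h y) \<or> t = (x, h x, h y)"
    by (auto simp: prism_def)
  have "x \<in> S" "y \<in> S" "\<forall>u\<in>{x, y}. \<forall>w\<in>{x, y}. d u w \<le> a"
    using assms(1) xy by (auto simp: vr_simplex_def)
  with assms(3,4) have "\<forall>u\<in>{x, y}. \<forall>w\<in>{x, y}. d u w \<le> a + c \<and> d u (h w) \<le> a + c
      \<and> d (h u) w \<le> a + c \<and> d (h u) (h w) \<le> a + c"
    by fastforce
  then have "vr_simplex d S (a + c) {x, y, h x, h y}"
    using \<open>x \<in> S\<close> \<open>y \<in> S\<close> assms(2) by (auto simp: vr_simplex_def)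
  then show "vr_simplex d S (a + c) (triangle_set t)"
    using t by (auto simp: vr_simplex_def)
qed

lemma is_1boundary_sym_diff_image_close:
  assumes "formal_cycle E" "\<forall>p\<in>#E. vr_simplex d S a (edge_set p)" "h ` S \<subseteq> S"
    and "\<forall>x\<in>S. \<forall>y\<in>S. d x (h y) \<le> d x y + c \<and> d (h x) y \<le> d x y + c \<and> d (h x) (h y) \<le> d x y + c"
    and "0 \<le> c" "a + c \<le> b"
  shows "is_1boundary d S b (sym_diff (chain_of E) (chain_of (image_mset (map_prod h h) E)))"
proof -
  have "\<forall>t\<in>#prism h E. vr_simplex d S b (triangle_set t)"
    using vr_simplex_prism[OF assms(2,3,5,4)] vr_simplex_mono \<open>a + c \<le> b\<close> by blast
  then show ?thesis
    unfolding is_1boundary_iff_formal chain_of_prism[OF assms(1), symmetric] by blast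
qed

lemma sym_diff_sym_diff_cancel: "sym_diff (sym_diff A B) B = A"
  by blast

lemma h1_rank_pos_interleave:
  assumes maps: "f ` S \<subseteq> S'" "g ` S' \<subseteq> S" and "0 \<le> \<epsilon>"
    and f_dist: "\<forall>x\<in>S. \<forall>y\<in>S. d' (f x) (f y) \<le> d x y + \<epsilon>"
    and g_dist: "\<forall>u\<in>S'. \<forall>w\<in>S'. d (g u) (g w) \<le> d' u w + \<epsilon>"
    and gf_close: "\<forall>x\<in>S. \<forall>y\<in>S. d x (g (f y)) \<le> d x y + 2 * \<epsilon> \<and> d (g (f x)) y \<le> d x y + 2 * \<epsilon>"
    and "h1_rank_pos d S a b" "a + 2 * \<epsilon> \<le> b"
  shows "h1_rank_pos d' S' (a + \<epsilon>) (b - \<epsilon>)"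
proof -
  obtain z where z: "z \<subseteq> vr_edges d S a" "is_1cycle z" "\<not> is_1boundary d S b z"
    using \<open>h1_rank_pos d S a b\<close> unfolding h1_rank_pos_def by blast
  obtain E where E: "formal_cycle E" "chain_of E = z" "\<forall>p\<in>#E. vr_simplex d S a (edge_set p)"
    using vr_cycle_obtain_formal[OF z(1,2)] .
  define h where "h = g \<circ> f"
  have hS: "h ` S \<subseteq> S" using maps unfolding h_def by auto
  have "d (h x) (h y) \<le> d x y + 2 * \<epsilon>" if "x \<in> S" "y \<in> S" for x y
  proof -
    have "f x \<in> S'" "f y \<in> S'" using maps that by auto
    then have "d (g (f x)) (g (f y)) \<le> d' (f x) (f y) + \<epsilon>" using g_dist by blast
    moreover have "d' (f x) (f y) \<le> d x y + \<epsilon>" using f_dist that by blast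
    ultimately show ?thesis unfolding h_def by simp
  qed
  then have h_close: "\<forall>x\<in>S. \<forall>y\<in>S. d x (h y) \<le> d x y + 2 * \<epsilon> \<and> d (h x) y \<le> d x y + 2 * \<epsilon>
      \<and> d (h x) (h y) \<le> d x y + 2 * \<epsilon>"
    using gf_close unfolding h_def by simp
  let ?E' = "image_mset (map_prod f f) E"
  let ?hz = "chain_of (image_mset (map_prod h h) E)"
  have "\<not> is_1boundary d' S' (b - \<epsilon>) (chain_of ?E')"
  proof
    assume "is_1boundary d' S' (b - \<epsilon>) (chain_of ?E')"
    have "is_1boundary d S b (sym_diff z ?hz)"
      using is_1boundary_sym_diff_image_close[OF E(1,3) hS h_close] \<open>0 \<le> \<epsilon>\<close> \<open>a + 2 * \<epsilon> \<le> b\<close> E(2)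
      by simp
    moreover from is_1boundary_image[OF \<open>is_1boundary d' S' (b - \<epsilon>) (chain_of ?E')\<close> maps(2) g_dist]
    have "is_1boundary d S b ?hz" by (simp add: h_def multiset.map_comp map_prod.comp)
    ultimately have "is_1boundary d S b (sym_diff (sym_diff z ?hz) ?hz)"
      by (rule is_1boundary_sym_diff)
    then show False using z(3) sym_diff_sym_diff_cancel[of z ?hz] by metis
  qed
  moreover note E' = vr_cycle_image[OF E(1,3) maps(1) f_dist]
  ultimately show ?thesis
    unfolding h1_rank_pos_def by (intro exI[of _ "chain_of ?E'"] conjI vr_cycle_chain_of[OF E'])
qed

lemma bdd_above_persistences:
  assumes "finite S"
  shows "bdd_above ({b - a | a b. 0 \<le> a \<and> a \<le> b \<and> h1_rank_pos d S a b} \<union> {0})"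
proof -
  obtain D where D: "\<forall>u\<in>S. \<forall>w\<in>S. d u w \<le> D"
    using finite_imageI[OF finite_cartesian_product[OF assms assms], of "case_prod d"]
    by (auto dest!: bdd_above_finite simp: bdd_above_def)
  show ?thesis
    unfolding bdd_above_def using h1_rank_pos_lt_diameter[OF _ D]
    by (intro exI[of _ "max D 0"]) fastforce
qed

lemma max_pers1_le_interleave:
  assumes "finite S'" and maps: "f ` S \<subseteq> S'" "g ` S' \<subseteq> S" and "0 \<le> \<epsilon>"
    and "\<forall>x\<in>S. \<forall>y\<in>S. d' (f x) (f y) \<le> d x y + \<epsilon>"
    and "\<forall>u\<in>S'. \<forall>w\<in>S'. d (g u) (g w) \<le> d' u w + \<epsilon>"
    and "\<forall>x\<in>S. \<forall>y\<in>S. d x (g (f y)) \<le> d x y + 2 * \<epsilon> \<and> d (g (f x)) y \<le> d x y + 2 * \<epsilon>"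
  shows "max_pers1 d S \<le> max_pers1 d' S' + 2 * \<epsilon>"
  unfolding max_pers1_def
proof (rule cSup_least)
  let ?P' = "{b - a | a b. 0 \<le> a \<and> a \<le> b \<and> h1_rank_pos d' S' a b} \<union> {0}"
  have bdd: "bdd_above ?P'" using bdd_above_persistences[OF \<open>finite S'\<close>] .
  have "0 \<le> Sup ?P'" by (rule cSup_upper[OF _ bdd]) simp
  fix x assume "x \<in> {b - a | a b. 0 \<le> a \<and> a \<le> b \<and> h1_rank_pos d S a b} \<union> {0}"
  then consider "x = 0" | a b where "x = b - a" "0 \<le> a" "h1_rank_pos d S a b" by blast
  then show "x \<le> Sup ?P' + 2 * \<epsilon>"
  proof cases
    case 1
    then show ?thesis using \<open>0 \<le> Sup ?P'\<close> \<open>0 \<le> \<epsilon>\<close> by simp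
  next
    case (2 a b)
    show ?thesis
    proof (cases "a + 2 * \<epsilon> \<le> b")
      case True
      then have "h1_rank_pos d' S' (a + \<epsilon>) (b - \<epsilon>)"
        using h1_rank_pos_interleave[OF maps \<open>0 \<le> \<epsilon>\<close>] assms(5-7) 2(3) by blast
      then have "(b - \<epsilon>) - (a + \<epsilon>) \<in> ?P'" using True 2(2) \<open>0 \<le> \<epsilon>\<close> by fastforce
      then have "(b - \<epsilon>) - (a + \<epsilon>) \<le> Sup ?P'" using bdd by (rule cSup_upper)
      then show ?thesis using 2(1) by simp
    next
      case False
      then show ?thesis using 2(1) \<open>0 \<le> Sup ?P'\<close> by simp
    qed
  qed
qed simp

theorem max_pers1_stability:
  assumes "finite S" "f ` S = S'" "0 \<le> \<epsilon>"
    and distortion: "\<forall>x\<in>S. \<forall>y\<in>S. \<bar>d' (f x) (f y) - d x y\<bar> \<le> \<epsilon>"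
  shows "\<bar>max_pers1 d S - max_pers1 d' S'\<bar> \<le> 2 * \<epsilon>"
proof -
  define g where "g = inv_into S f"
  have gS: "g ` S' \<subseteq> S" and fg: "\<And>u. u \<in> S' \<Longrightarrow> f (g u) = u"
    using assms(2) by (auto simp: g_def inv_into_into f_inv_into_f)
  have fS: "f ` S \<subseteq> S'" and "finite S'" using assms(1,2) by auto
  have "d' (f x) (f y) \<le> d x y + \<epsilon> \<and> d x y \<le> d' (f x) (f y) + \<epsilon>" if "x \<in> S" "y \<in> S" for x y
    using distortion[rule_format, OF that] by (simp add: abs_le_iff)
  then have f_dist: "\<forall>x\<in>S. \<forall>y\<in>S. d' (f x) (f y) \<le> d x y + \<epsilon>"
    and f_dist': "\<forall>x\<in>S. \<forall>y\<in>S. d x y \<le> d' (f x) (f y) + \<epsilon>" by auto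
  have g_dist: "\<forall>u\<in>S'. \<forall>w\<in>S'. d (g u) (g w) \<le> d' u w + \<epsilon>"
    using f_dist' gS fg by (metis image_subset_iff)
  have "\<forall>x\<in>S. \<forall>y\<in>S. d x (g (f y)) \<le> d x y + 2 * \<epsilon> \<and> d (g (f x)) y \<le> d x y + 2 * \<epsilon>"
  proof (intro ballI conjI)
    fix x y assume "x \<in> S" "y \<in> S"
    then have "g (f x) \<in> S" "g (f y) \<in> S" "f (g (f x)) = f x" "f (g (f y)) = f y"
      using fS gS fg by auto
    then show "d x (g (f y)) \<le> d x y + 2 * \<epsilon>" "d (g (f x)) y \<le> d x y + 2 * \<epsilon>"
      using f_dist f_dist' \<open>x \<in> S\<close> \<open>y \<in> S\<close> by (metis add.assoc mult_2 add_right_mono order.trans)+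
  qed
  from max_pers1_le_interleave[OF \<open>finite S'\<close> fS gS \<open>0 \<le> \<epsilon>\<close> f_dist g_dist this]
  have "max_pers1 d S \<le> max_pers1 d' S' + 2 * \<epsilon>" .
  moreover have "max_pers1 d' S' \<le> max_pers1 d S + 2 * \<epsilon>"
    by (rule max_pers1_le_interleave[OF \<open>finite S\<close> gS fS \<open>0 \<le> \<epsilon>\<close> g_dist f_dist])
       (use fS fg \<open>0 \<le> \<epsilon>\<close> in \<open>auto simp: image_subset_iff\<close>)
  ultimately show ?thesis by linarith
qed

section \<open>Principal components and pairwise distances\<close>

definition trace :: "'a :: comm_ring_1 mat \<Rightarrow> 'a" where
  "trace A = (\<Sum>i<dim_row A. A $$ (i, i))"

lemma trace_mult_comm:
  assumes "A \<in> carrier_mat n k" "B \<in> carrier_mat k n"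
  shows "trace (A * B) = trace (B * A)"
proof -
  have "trace (A * B) = (\<Sum>i<n. \<Sum>j<k. A $$ (i, j) * B $$ (j, i))"
    unfolding trace_def using assms by (simp add: scalar_prod_def atLeast0LessThan)
  also have "\<dots> = (\<Sum>j<k. \<Sum>i<n. B $$ (j, i) * A $$ (i, j))"
    by (subst sum.swap) (simp add: mult.commute)
  also have "\<dots> = trace (B * A)"
    unfolding trace_def using assms by (simp add: scalar_prod_def atLeast0LessThan)
  finally show ?thesis .
qed

lemma trace_mult_transpose:
  assumes "A \<in> carrier_mat n m" "B \<in> carrier_mat n m"
  shows "trace (A * B\<^sup>T) = (\<Sum>i<n. \<Sum>j<m. A $$ (i, j) * B $$ (i, j))"
  unfolding trace_def using assms by (simp add: scalar_prod_def atLeast0LessThan)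

lemma trace_mat_diag [simp]: "trace (mat_diag n f) = (\<Sum>i<n. f i)"
  by (simp add: trace_def mat_diag_def)

lemma trace_square_upper_triangular:
  assumes "B \<in> carrier_mat n n" "upper_triangular B"
  shows "trace (B * B) = (\<Sum>i<n. (B $$ (i, i))^2)"
proof -
  have "B $$ (i, j) * B $$ (j, i) = 0" if "i < n" "j < n" "i \<noteq> j" for i j
    using assms that by (cases "i < j") (auto simp: upper_triangularD)
  then have "(\<Sum>j<n. B $$ (i, j) * B $$ (j, i)) = (B $$ (i, i))^2" if "i < n" for i
    using that by (subst sum.remove[of _ i]) (auto simp: power2_eq_square intro: sum.neutral)
  then show ?thesis
    unfolding trace_def using assms by (simp add: scalar_prod_def atLeast0LessThan)
qed

lemma trace_square_eq_sum_eigenvalues: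
  fixes G :: "'a :: conjugatable_ordered_field mat"
  assumes G: "G \<in> carrier_mat n n" and cp: "char_poly G = (\<Prod>a\<leftarrow>ls. [:- a, 1:])"
  shows "trace (G * G) = (\<Sum>i<n. (ls ! i)^2)"
proof -
  obtain B P Q where "schur_decomposition G ls = (B, P, Q)"
    by (cases "schur_decomposition G ls") auto
  from schur_decomposition[OF G cp this]
  have sim: "similar_mat_wit G B P Q" and ut: "upper_triangular B" and diag: "diag_mat B = ls"
    by auto
  from similar_mat_witD2[OF G sim]
  have QP: "Q * P = 1\<^sub>m n" and GPBQ: "G = P * B * Q"
    and B: "B \<in> carrier_mat n n" and P: "P \<in> carrier_mat n n" and Q: "Q \<in> carrier_mat n n"
    by auto
  have "G * G = P * (B * B * Q)"
  proof -
    have "G * G = P * (B * (Q * P) * B * Q)"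
      using B P Q by (simp add: GPBQ assoc_mult_mat[of _ n n _ n _ n])
    then show ?thesis using QP B by simp
  qed
  then have "trace (G * G) = trace (B * B * Q * P)"
    using trace_mult_comm[OF P, of "B * B * Q"] B Q by (simp add: assoc_mult_mat[of _ n n _ n _ n])
  also have "\<dots> = trace (B * B)"
    using QP B P Q by (simp add: assoc_mult_mat[of _ n n _ n _ n])
  also have "\<dots> = (\<Sum>i<n. (ls ! i)^2)"
    unfolding trace_square_upper_triangular[OF B ut] using diag B
    by (intro sum.cong refl) (auto simp: diag_mat_def)
  finally show ?thesis .
qed

lemma det_four_block_mat_one_right:
  fixes A :: "'a :: idom mat"
  assumes A: "A \<in> carrier_mat n n" and B: "B \<in> carrier_mat n m" and C: "C \<in> carrier_mat m n"
  shows "det (four_block_mat A B C (1\<^sub>m m)) = det (A - B * C)"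
proof -
  let ?L = "four_block_mat (1\<^sub>m n) (- B) (0\<^sub>m m n) (1\<^sub>m m)"
  have "det ?L = 1"
    using B by (subst det_four_block_mat_lower_left_zero[of _ n _ m]) auto
  then have "det (four_block_mat A B C (1\<^sub>m m)) = det (?L * four_block_mat A B C (1\<^sub>m m))"
    using A B C by (simp add: det_mult[of _ "n + m"])
  also have "?L * four_block_mat A B C (1\<^sub>m m) = four_block_mat (A - B * C) (0\<^sub>m n m) C (1\<^sub>m m)"
    using A B C by (subst mult_four_block_mat[of _ n n _ m _ m]) (auto simp: minus_add_uminus_mat[symmetric, of _ n n])
  also have "det \<dots> = det (A - B * C)"
    using A B C by (subst det_four_block_mat_upper_right_zero[of _ n _ m]) auto
  finally show ?thesis .
qed

lemma det_four_block_mat_one_left: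
  fixes D :: "'a :: idom mat"
  assumes B: "B \<in> carrier_mat n m" and C: "C \<in> carrier_mat m n" and D: "D \<in> carrier_mat m m"
  shows "det (four_block_mat (1\<^sub>m n) B C D) = det (D - C * B)"
proof -
  let ?R = "four_block_mat (1\<^sub>m n) (0\<^sub>m n m) (- C) (1\<^sub>m m)"
  have "det ?R = 1"
    using C by (subst det_four_block_mat_upper_right_zero[of _ n _ m]) auto
  then have "det (four_block_mat (1\<^sub>m n) B C D) = det (?R * four_block_mat (1\<^sub>m n) B C D)"
    using B C D by (simp add: det_mult[of _ "n + m"])
  also have "?R * four_block_mat (1\<^sub>m n) B C D = four_block_mat (1\<^sub>m n) B (0\<^sub>m m n) (D - C * B)"
    using B C D by (subst mult_four_block_mat[of _ n n _ m _ m])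
      (auto simp: minus_add_uminus_mat[symmetric, of _ m m] add.commute)
  also have "det \<dots> = det (D - C * B)"
    using B C D by (subst det_four_block_mat_lower_left_zero[of _ n _ m]) auto
  finally show ?thesis .
qed

lemma char_poly_matrix_mult:
  assumes "X \<in> carrier_mat n m" "Y \<in> carrier_mat m n"
  shows "char_poly_matrix (X * Y) = [:0, 1:] \<cdot>\<^sub>m 1\<^sub>m n - map_mat (\<lambda>a. [:a:]) X * map_mat (\<lambda>a. [:a:]) Y"
  using assms by (intro eq_matI)
    (auto simp: char_poly_matrix_def scalar_prod_def mult_to_poly sum_to_poly mult.commute)

text \<open>Sylvester's determinant identity: \<open>XY\<close> and \<open>YX\<close> have the same nonzero eigenvalues.\<close>

lemma char_poly_mult_commute:
  fixes X :: "'a :: idom mat"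
  assumes X: "X \<in> carrier_mat n m" and Y: "Y \<in> carrier_mat m n"
  shows "char_poly (X * Y) * [:0, 1:] ^ m = [:0, 1:] ^ n * char_poly (Y * X)"
proof -
  let ?x = "[:0, 1:] :: 'a poly"
  define Xp where "Xp = map_mat (\<lambda>a. [:a:]) X"
  define Yp where "Yp = map_mat (\<lambda>a. [:a:]) Y"
  have Xp: "Xp \<in> carrier_mat n m" and Yp: "Yp \<in> carrier_mat m n"
    using X Y by (auto simp: Xp_def Yp_def)
  define M1 where "M1 = four_block_mat (?x \<cdot>\<^sub>m 1\<^sub>m n) Xp Yp (1\<^sub>m m)"
  define M2 where "M2 = four_block_mat (1\<^sub>m n) Xp Yp (?x \<cdot>\<^sub>m 1\<^sub>m m)"
  define D1 where "D1 = four_block_mat (?x \<cdot>\<^sub>m 1\<^sub>m n) (0\<^sub>m n m) (0\<^sub>m m n) (1\<^sub>m m)"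
  define D2 where "D2 = four_block_mat (1\<^sub>m n) (0\<^sub>m n m) (0\<^sub>m m n) (?x \<cdot>\<^sub>m 1\<^sub>m m)"
  have dM1: "det M1 = char_poly (X * Y)"
    unfolding M1_def char_poly_def char_poly_matrix_mult[OF X Y] Xp_def[symmetric] Yp_def[symmetric]
    by (rule det_four_block_mat_one_right[OF _ Xp Yp]) simp
  have dM2: "det M2 = char_poly (Y * X)"
    unfolding M2_def char_poly_def char_poly_matrix_mult[OF Y X] Xp_def[symmetric] Yp_def[symmetric]
    by (rule det_four_block_mat_one_left[OF Xp Yp]) simp
  have dD1: "det D1 = ?x ^ n" and dD2: "det D2 = ?x ^ m"
    unfolding D1_def D2_def by (subst det_four_block_mat_upper_right_zero[of _ n _ m]; simp)+
  have "M1 * D2 = D1 * M2"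
    unfolding M1_def M2_def D1_def D2_def using Xp Yp
    by (subst mult_four_block_mat[of _ n n _ m _ m], auto, subst mult_four_block_mat[of _ n n _ m _ m], auto
        simp: mult_smult_distrib[of _ n m _ m] mult_smult_assoc_mat[of _ n n _ m])
  moreover have "M1 \<in> carrier_mat (n + m) (n + m)" "M2 \<in> carrier_mat (n + m) (n + m)"
    "D1 \<in> carrier_mat (n + m) (n + m)" "D2 \<in> carrier_mat (n + m) (n + m)"
    unfolding M1_def M2_def D1_def D2_def using Xp Yp by auto
  ultimately have "det M1 * det D2 = det D1 * det M2" by (metis det_mult)
  then show ?thesis using dM1 dM2 dD1 dD2 by simp
qed

lemma gram_eigenvalue_nonneg:
  fixes X :: "real mat"
  assumes X: "X \<in> carrier_mat n m" and "eigenvalue (X * X\<^sup>T) a"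
  shows "0 \<le> a"
proof -
  obtain v where v: "v \<in> carrier_vec n" "v \<noteq> 0\<^sub>v n" "(X * X\<^sup>T) *\<^sub>v v = a \<cdot>\<^sub>v v"
    using assms unfolding eigenvalue_def eigenvector_def by auto
  have square: "w \<bullet>c w = w \<bullet> w" for w :: "real vec"
    by (simp add: scalar_prod_def)
  have "a * (v \<bullet> v) = v \<bullet> ((X * X\<^sup>T) *\<^sub>v v)" using v by simp
  also have "\<dots> = (X\<^sup>T *\<^sub>v v) \<bullet> (X\<^sup>T *\<^sub>v v)"
    using X v(1) by (simp add: transpose_vec_mult_scalar[of X n m])
  also have "\<dots> \<ge> 0" using conjugate_square_ge_0_vec[of "X\<^sup>T *\<^sub>v v"] by (simp add: square)
  finally show ?thesis
    using conjugate_square_greater_0_vec[OF v(1)] v(2) by (simp add: square zero_le_mult_iff)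
qed

lemma order_prod_linear:
  "Polynomial.order c (\<Prod>a\<leftarrow>ls. [:- a, 1:]) = count (mset ls) (c :: 'a :: idom)"
proof -
  have "Polynomial.order c (\<Prod>a\<leftarrow>ls. [:- a, 1:]) = (\<Sum>a\<leftarrow>ls. Polynomial.order c [:- a, 1:])"
    by (subst order_prod_list) (auto simp: comp_def)
  also have "\<dots> = count (mset ls) c"
    by (induction ls) (auto simp: order_linear')
  finally show ?thesis .
qed

lemma sorted_eigenvalues_nonneg:
  assumes "X \<in> carrier_mat n m" "sorted_eigenvalues (X * X\<^sup>T) ls" "a \<in> set ls"
  shows "0 \<le> a"
proof -
  have "poly (char_poly (X * X\<^sup>T)) a = 0"
    using assms(2,3) unfolding sorted_eigenvalues_def by (simp add: linear_poly_root)
  then show ?thesis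
    using assms(1) eigenvalue_root_char_poly[of "X * X\<^sup>T" n] by (intro gram_eigenvalue_nonneg) auto
qed

lemma sorted_wrt_ge_replicate: "sorted_wrt (\<ge>) (replicate k (x :: 'a :: order))"
  by (induction k) auto

lemma sorted_wrt_ge_mset_eq:
  fixes xs ys :: "'a :: linorder list"
  assumes "sorted_wrt (\<ge>) xs" "sorted_wrt (\<ge>) ys" "mset xs = mset ys"
  shows "xs = ys"
proof -
  have "sorted (rev xs)" "sorted (rev ys)" using assms(1,2) by (simp_all add: sorted_wrt_rev)
  moreover have "mset (rev xs) = mset (rev ys)" using assms(3) by simp
  ultimately have "rev xs = rev ys" by (metis properties_for_sort sorted_sort_id)
  then show ?thesis by simp
qed

lemma sorted_eigenvalues_gram_transpose:
  fixes X :: "real mat"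
  assumes X: "X \<in> carrier_mat n m"
    and lams: "sorted_eigenvalues (X * X\<^sup>T) lams" and mus: "sorted_eigenvalues (X\<^sup>T * X) mus"
  shows "lams @ replicate m 0 = mus @ replicate n 0"
proof -
  have lin_replicate: "(\<Prod>a\<leftarrow>replicate k (0::real). [:- a, 1:]) = [:0, 1:] ^ k" for k
    by (induction k) auto
  have "(\<Prod>a\<leftarrow>lams @ replicate m 0. [:- a, 1:]) = char_poly (X * X\<^sup>T) * [:0, 1:] ^ m"
    using lams by (simp add: sorted_eigenvalues_def lin_replicate)
  also have "\<dots> = [:0, 1:] ^ n * char_poly (X\<^sup>T * X)"
    using X by (intro char_poly_mult_commute) auto
  also have "\<dots> = (\<Prod>a\<leftarrow>mus @ replicate n 0. [:- a, 1:])"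
    using mus by (simp add: sorted_eigenvalues_def lin_replicate mult.commute)
  finally have "mset (lams @ replicate m 0) = mset (mus @ replicate n 0)"
    by (metis multiset_eqI order_prod_linear)
  moreover have "sorted_wrt (\<ge>) (lams @ replicate m 0)" "sorted_wrt (\<ge>) (mus @ replicate n 0)"
    using lams mus sorted_eigenvalues_nonneg[OF X lams]
      sorted_eigenvalues_nonneg[of "X\<^sup>T" m n mus] X
    by (auto simp: sorted_eigenvalues_def sorted_wrt_append sorted_wrt_ge_replicate)
  ultimately show ?thesis by (intro sorted_wrt_ge_mset_eq)
qed

lemma gram_eigenvalues_tail_bound:
  fixes X :: "real mat"
  assumes X: "X \<in> carrier_mat n m" and "K \<le> m"
    and lams: "sorted_eigenvalues (X * X\<^sup>T) lams" and mus: "sorted_eigenvalues (X\<^sup>T * X) mus"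
  shows "(\<Sum>i<n. (lams ! i)^2) - (\<Sum>j<K. (mus ! j)^2) \<le> (\<Sum>i\<in>{K..<n}. (lams ! i)^2)"
proof -
  define p where "p = min K n"
  have "length lams = n" "length mus = m"
    using lams mus X by (auto simp: sorted_eigenvalues_def)
  then have "lams ! j = mus ! j" if "j < p" for j
    using sorted_eigenvalues_gram_transpose[OF X lams mus] that \<open>K \<le> m\<close>
    by (metis p_def min_less_iff_conj nth_append order_less_le_trans)
  then have "(\<Sum>j<p. (lams ! j)^2) \<le> (\<Sum>j<K. (mus ! j)^2)"
    by (simp add: p_def sum_mono2)
  moreover have "(\<Sum>i<n. (lams ! i)^2) = (\<Sum>i<p. (lams ! i)^2) + (\<Sum>i\<in>{K..<n}. (lams ! i)^2)"
  proof -
    have "{..<n} = {..<p} \<union> {K..<n}" "{..<p} \<inter> {K..<n} = {}" by (auto simp: p_def)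
    then show ?thesis by (simp add: sum.union_disjoint)
  qed
  ultimately show ?thesis by simp
qed

lemma eigencolumns_mult:
  fixes A V :: "'a :: comm_ring_1 mat"
  assumes A: "A \<in> carrier_mat m m" and V: "V \<in> carrier_mat m K"
    and eig: "\<forall>j<K. A *\<^sub>v col V j = mus ! j \<cdot>\<^sub>v col V j"
  shows "A * V = V * mat_diag K (\<lambda>j. mus ! j)"
proof (rule eq_matI)
  fix i j assume "i < dim_row (V * mat_diag K (\<lambda>j. mus ! j))" "j < dim_col (V * mat_diag K (\<lambda>j. mus ! j))"
  then have "i < m" "j < K" using V by (auto simp: mat_diag_def)
  then have "(A * V) $$ (i, j) = (A *\<^sub>v col V j) $ i" using A V by simp
  also have "\<dots> = mus ! j * V $$ (i, j)" using eig \<open>i < m\<close> \<open>j < K\<close> V by simp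
  finally show "(A * V) $$ (i, j) = (V * mat_diag K (\<lambda>j. mus ! j)) $$ (i, j)"
    using V \<open>i < m\<close> \<open>j < K\<close> by (simp add: mat_diag_mult_right[OF V] mult.commute)
qed (use A V in \<open>auto simp: mat_diag_def\<close>)

lemma pca_gram_products:
  fixes X V :: "real mat"
  assumes X: "X \<in> carrier_mat n m" and V: "V \<in> carrier_mat m K" and VV: "V\<^sup>T * V = 1\<^sub>m K"
    and eig: "\<forall>j<K. (X\<^sup>T * X) *\<^sub>v col V j = mus ! j \<cdot>\<^sub>v col V j"
  shows "(X * V)\<^sup>T * (X * V) = mat_diag K (\<lambda>j. mus ! j)"
    and "(X * V)\<^sup>T * (X * X\<^sup>T) * (X * V) = mat_diag K (\<lambda>j. (mus ! j)^2)"
proof -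
  define A where "A = X\<^sup>T * X"
  define D where "D = mat_diag K (\<lambda>j. mus ! j)"
  have Xt: "X\<^sup>T \<in> carrier_mat m n" and Vt: "V\<^sup>T \<in> carrier_mat K m" and XV: "X * V \<in> carrier_mat n K"
    and A: "A \<in> carrier_mat m m" and D: "D \<in> carrier_mat K K"
    using X V by (auto simp: A_def D_def)
  have sA: "A\<^sup>T = A" and sD: "D\<^sup>T = D"
    using X by (auto simp: A_def D_def transpose_mult mat_diag_def)
  have AV: "A * V = V * D"
    unfolding A_def D_def using X V eig by (intro eigencolumns_mult) auto
  have "(X * V)\<^sup>T * (X * V) = V\<^sup>T * (A * V)" unfolding A_def
    using X V by (simp add: transpose_mult[of X n m] assoc_mult_mat[of _ K m _ n _ K])
  also have "\<dots> = (V\<^sup>T * V) * D" unfolding AV using V D by simp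
  finally show "(X * V)\<^sup>T * (X * V) = D" using VV D by simp
  have "(X * V)\<^sup>T * (X * X\<^sup>T) * (X * V) = V\<^sup>T * (X\<^sup>T * (X * (X\<^sup>T * (X * V))))"
    using X V Xt Vt XV
    by (simp add: transpose_mult[of X n m] assoc_mult_mat[of "V\<^sup>T * X\<^sup>T" K n "X * X\<^sup>T" n "X * V" K]
        assoc_mult_mat[of X n m "X\<^sup>T" n "X * V" K]
        assoc_mult_mat[of "V\<^sup>T" K m "X\<^sup>T" n "X * (X\<^sup>T * (X * V))" K])
  also have "\<dots> = (A * V)\<^sup>T * (A * V)"
  proof -
    have "(A * V)\<^sup>T = V\<^sup>T * A" using A V sA by (simp add: transpose_mult[OF A V])
    then have "(A * V)\<^sup>T * (A * V) = (V\<^sup>T * (X\<^sup>T * X)) * ((X\<^sup>T * X) * V)"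
      by (simp add: A_def)
    then show ?thesis using X V Xt Vt XV
      by (simp add: assoc_mult_mat[of "V\<^sup>T" K m "X\<^sup>T * X" m "X\<^sup>T * (X * V)" K]
          assoc_mult_mat[of "X\<^sup>T" m n X m V K] assoc_mult_mat[of "X\<^sup>T" m n X m "X\<^sup>T * (X * V)" K])
  qed
  also have "\<dots> = D * ((V\<^sup>T * V) * D)"
    unfolding AV using V D sD
    by (simp add: transpose_mult[of V m K] assoc_mult_mat[of D K K "V\<^sup>T" m "V * D" K]
        assoc_mult_mat[of "V\<^sup>T" K m V K D K])
  finally show "(X * V)\<^sup>T * (X * X\<^sup>T) * (X * V) = mat_diag K (\<lambda>j. (mus ! j)^2)"
    using VV D by simp (simp add: D_def power2_eq_square)
qed

lemma frobenius_square_diff_symmetric: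
  fixes G H :: "real mat"
  assumes G: "G \<in> carrier_mat n n" and H: "H \<in> carrier_mat n n" and "G\<^sup>T = G" "H\<^sup>T = H"
  shows "(\<Sum>a<n. \<Sum>b<n. ((G - H) $$ (a, b))^2) = trace (G * G) - 2 * trace (G * H) + trace (H * H)"
proof -
  have "(\<Sum>a<n. \<Sum>b<n. ((G - H) $$ (a, b))^2)
      = (\<Sum>a<n. \<Sum>b<n. G $$ (a, b) * G $$ (a, b)) - 2 * (\<Sum>a<n. \<Sum>b<n. G $$ (a, b) * H $$ (a, b))
        + (\<Sum>a<n. \<Sum>b<n. H $$ (a, b) * H $$ (a, b))"
    using G H by (simp add: power2_eq_square algebra_simps sum.distrib sum_subtractf sum_distrib_left)
  then show ?thesis
    using trace_mult_transpose[OF G G] trace_mult_transpose[OF G H] trace_mult_transpose[OF H H] assms(3,4)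
    by simp
qed

lemma frobenius_gram_defect:
  fixes X V :: "real mat"
  assumes X: "X \<in> carrier_mat n m" and V: "V \<in> carrier_mat m K" and VV: "V\<^sup>T * V = 1\<^sub>m K"
    and eig: "\<forall>j<K. (X\<^sup>T * X) *\<^sub>v col V j = mus ! j \<cdot>\<^sub>v col V j"
  shows "(\<Sum>a<n. \<Sum>b<n. ((X * X\<^sup>T - (X * V) * (X * V)\<^sup>T) $$ (a, b))^2)
          = trace ((X * X\<^sup>T) * (X * X\<^sup>T)) - (\<Sum>j<K. (mus ! j)^2)"
proof -
  define G where "G = X * X\<^sup>T"
  define W where "W = X * V"
  have G: "G \<in> carrier_mat n n" and W: "W \<in> carrier_mat n K"
    using X V by (auto simp: G_def W_def)
  note products = pca_gram_products[OF X V VV eig, folded G_def W_def]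
  have "trace (G * (W * W\<^sup>T)) = trace (W\<^sup>T * G * W)"
    using trace_mult_comm[of "G * W" n K "W\<^sup>T"] G W by (simp add: assoc_mult_mat[of _ n n _ K _ n])
  then have GH: "trace (G * (W * W\<^sup>T)) = (\<Sum>j<K. (mus ! j)^2)" using products(2) by simp
  have "trace ((W * W\<^sup>T) * (W * W\<^sup>T)) = trace ((W\<^sup>T * W) * (W\<^sup>T * W))"
    using trace_mult_comm[of W n K "W\<^sup>T * (W * W\<^sup>T)"] W
    by (simp add: assoc_mult_mat[of _ n K _ n _ n] assoc_mult_mat[of _ K n _ K _ n]
        assoc_mult_mat[of _ K n _ n _ K] assoc_mult_mat[of "W\<^sup>T" K n W K "W\<^sup>T * W" K])
  then have HH: "trace ((W * W\<^sup>T) * (W * W\<^sup>T)) = (\<Sum>j<K. (mus ! j)^2)"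
    using products(1) by (simp add: power2_eq_square)
  have "G\<^sup>T = G" "(W * W\<^sup>T)\<^sup>T = W * W\<^sup>T"
    using X W by (auto simp: G_def transpose_mult)
  from frobenius_square_diff_symmetric[OF G _ this] W GH HH
  show ?thesis unfolding G_def[symmetric] W_def[symmetric] by simp
qed

lemma eucl_dist_square:
  assumes "dim_vec u = n" "dim_vec v = n"
  shows "(eucl_dist u v)^2 = u \<bullet> u + v \<bullet> v - 2 * (u \<bullet> v)"
proof -
  have "(eucl_dist u v)^2 = (\<Sum>i<n. (u $ i - v $ i)^2)"
    unfolding eucl_dist_def using assms by (simp add: sum_nonneg)
  also have "\<dots> = (\<Sum>i<n. u $ i * u $ i + v $ i * v $ i - 2 * (u $ i * v $ i))"
    by (intro sum.cong refl) (simp add: power2_eq_square algebra_simps)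
  also have "\<dots> = u \<bullet> u + v \<bullet> v - 2 * (u \<bullet> v)"
    using assms by (simp add: scalar_prod_def sum.distrib sum_subtractf sum_distrib_left atLeast0LessThan)
  finally show ?thesis .
qed

lemma abs_diff_le_sqrt_abs_diff_squares:
  fixes p q :: real
  assumes "0 \<le> p" "0 \<le> q"
  shows "\<bar>p - q\<bar> \<le> sqrt \<bar>p^2 - q^2\<bar>"
proof -
  have "\<bar>p - q\<bar>^2 = \<bar>p - q\<bar> * \<bar>p - q\<bar>" by (rule power2_eq_square)
  also have "\<dots> \<le> \<bar>p - q\<bar> * (p + q)" using assms by (intro mult_left_mono) auto
  also have "\<dots> = \<bar>(p - q) * (p + q)\<bar>" using assms by (simp add: abs_mult)
  also have "(p - q) * (p + q) = p^2 - q^2" by (simp add: power2_eq_square algebra_simps)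
  finally show ?thesis by (simp add: real_le_rsqrt)
qed

lemma gram_distance_square:
  assumes "X \<in> carrier_mat n m" "a < n" "b < n"
  shows "(eucl_dist (row X a) (row X b))^2
          = (X * X\<^sup>T) $$ (a, a) + (X * X\<^sup>T) $$ (b, b) - 2 * (X * X\<^sup>T) $$ (a, b)"
  using assms by (simp add: eucl_dist_square[of _ m])

lemma square_sum_le_four_sum_squares:
  fixes p q r :: real
  shows "(p + q - 2 * r)^2 \<le> 4 * (p^2 + q^2 + r^2 + r^2)"
proof -
  have "4 * (p^2 + q^2 + r^2 + r^2) - (p + q - 2 * r)^2 = (p - q)^2 + 2 * (p + r)^2 + 2 * (q + r)^2"
    by (simp add: power2_eq_square algebra_simps)
  then show ?thesis by (smt (verit) zero_le_power2)
qed

lemma row_distance_distortion: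
  fixes X W :: "real mat"
  assumes X: "X \<in> carrier_mat n m" and W: "W \<in> carrier_mat n k" and "a < n" "b < n"
  shows "\<bar>eucl_dist (row X a) (row X b) - eucl_dist (row W a) (row W b)\<bar>
          \<le> sqrt 2 * root 4 (\<Sum>i<n. \<Sum>j<n. ((X * X\<^sup>T - W * W\<^sup>T) $$ (i, j))^2)"
proof -
  define C where "C = X * X\<^sup>T - W * W\<^sup>T"
  define F where "F = (\<Sum>i<n. \<Sum>j<n. (C $$ (i, j))^2)"
  define d1 where "d1 = eucl_dist (row X a) (row X b)"
  define d2 where "d2 = eucl_dist (row W a) (row W b)"
  have d: "d1^2 - d2^2 = C $$ (a, a) + C $$ (b, b) - 2 * C $$ (a, b)"
    unfolding d1_def d2_def C_def using assms gram_distance_square[OF X] gram_distance_square[OF W]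
    by simp
  have "(d1^2 - d2^2)^2 \<le> 4 * F"
  proof (cases "a = b")
    case False
    have "C $$ (b, a) = C $$ (a, b)"
      unfolding C_def using assms comm_scalar_prod[of "row X a" m] comm_scalar_prod[of "row W a" k]
      by simp
    have "(d1^2 - d2^2)^2 \<le> 4 * ((C $$ (a, a))^2 + (C $$ (b, b))^2 + (C $$ (a, b))^2 + (C $$ (a, b))^2)"
      unfolding d by (rule square_sum_le_four_sum_squares)
    also have "\<dots> = 4 * (\<Sum>p\<in>{(a, a), (b, b), (a, b), (b, a)}. (C $$ p)^2)"
      using False \<open>C $$ (b, a) = C $$ (a, b)\<close> by simp
    also have "\<dots> \<le> 4 * (\<Sum>p\<in>{..<n} \<times> {..<n}. (C $$ p)^2)"
      using \<open>a < n\<close> \<open>b < n\<close> by (intro mult_left_mono sum_mono2) auto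
    finally show ?thesis by (simp add: F_def sum.cartesian_product)
  qed (simp add: d F_def sum_nonneg)
  then have "\<bar>d1^2 - d2^2\<bar> \<le> 2 * sqrt F"
    using real_sqrt_le_mono[of "(d1^2 - d2^2)^2" "4 * F"] by (simp add: real_sqrt_mult)
  moreover have "\<bar>d1 - d2\<bar> \<le> sqrt \<bar>d1^2 - d2^2\<bar>"
    by (rule abs_diff_le_sqrt_abs_diff_squares) (simp_all add: d1_def d2_def eucl_dist_def sum_nonneg)
  ultimately have "\<bar>d1 - d2\<bar> \<le> sqrt (2 * sqrt F)"
    by (meson order.trans real_sqrt_le_mono)
  also have "sqrt (2 * sqrt F) = sqrt 2 * root 4 F"
    using real_root_mult_exp[of 2 2 F] by (simp add: sqrt_def real_root_mult)
  finally show ?thesis unfolding d1_def d2_def F_def C_def .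
qed

lemma pca_row_distance_distortion:
  fixes X V :: "real mat"
  assumes X: "X \<in> carrier_mat n m" and "K \<le> m"
    and lams: "sorted_eigenvalues (X * X\<^sup>T) lams" and V: "top_right_singular_vectors X K V"
    and "a < n" "b < n"
  shows "\<bar>eucl_dist (row X a) (row X b) - eucl_dist (row (X * V) a) (row (X * V) b)\<bar>
          \<le> sqrt 2 * root 4 (\<Sum>i\<in>{K..<n}. (lams ! i)^2)"
proof -
  obtain mus where V': "V \<in> carrier_mat m K" "V\<^sup>T * V = 1\<^sub>m K"
    and mus: "sorted_eigenvalues (X\<^sup>T * X) mus"
    and eig: "\<forall>j<K. (X\<^sup>T * X) *\<^sub>v col V j = mus ! j \<cdot>\<^sub>v col V j"
    using V X unfolding top_right_singular_vectors_def by auto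
  have "trace ((X * X\<^sup>T) * (X * X\<^sup>T)) = (\<Sum>i<n. (lams ! i)^2)"
    using X lams by (intro trace_square_eq_sum_eigenvalues) (auto simp: sorted_eigenvalues_def)
  then have F: "(\<Sum>i<n. \<Sum>j<n. ((X * X\<^sup>T - (X * V) * (X * V)\<^sup>T) $$ (i, j))^2)
      \<le> (\<Sum>i\<in>{K..<n}. (lams ! i)^2)"
    using frobenius_gram_defect[OF X V' eig] gram_eigenvalues_tail_bound[OF X \<open>K \<le> m\<close> lams mus]
    by simp
  have "\<bar>eucl_dist (row X a) (row X b) - eucl_dist (row (X * V) a) (row (X * V) b)\<bar>
      \<le> sqrt 2 * root 4 (\<Sum>i<n. \<Sum>j<n. ((X * X\<^sup>T - (X * V) * (X * V)\<^sup>T) $$ (i, j))^2)"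
    using X V' assms(5,6) by (intro row_distance_distortion) auto
  also have "\<dots> \<le> sqrt 2 * root 4 (\<Sum>i\<in>{K..<n}. (lams ! i)^2)"
    using F by simp
  finally show ?thesis .
qed

lemma pca_row_cloud_distortion:
  fixes X V :: "real mat"
  assumes X: "X \<in> carrier_mat n m" and "K \<le> m"
    and lams: "sorted_eigenvalues (X * X\<^sup>T) lams" and V: "top_right_singular_vectors X K V"
  shows "\<forall>x\<in>row_cloud X. \<forall>y\<in>row_cloud X.
           \<bar>eucl_dist (vec K (\<lambda>j. x \<bullet> col V j)) (vec K (\<lambda>j. y \<bullet> col V j)) - eucl_dist x y\<bar>
             \<le> sqrt 2 * root 4 (\<Sum>i\<in>{K..<n}. (lams ! i)^2)"
proof (intro ballI)
  fix x y assume "x \<in> row_cloud X" "y \<in> row_cloud X"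
  then obtain a b where ab: "a < n" "b < n" "x = row X a" "y = row X b"
    using X by (auto simp: row_cloud_def)
  have "V \<in> carrier_mat m K" using V X by (simp add: top_right_singular_vectors_def)
  then have "vec K (\<lambda>j. x \<bullet> col V j) = row (X * V) a" "vec K (\<lambda>j. y \<bullet> col V j) = row (X * V) b"
    using row_mult[OF X] ab by auto
  then show "\<bar>eucl_dist (vec K (\<lambda>j. x \<bullet> col V j)) (vec K (\<lambda>j. y \<bullet> col V j)) - eucl_dist x y\<bar>
      \<le> sqrt 2 * root 4 (\<Sum>i\<in>{K..<n}. (lams ! i)^2)"
    using pca_row_distance_distortion[OF assms ab(1,2)] ab(3,4) by (simp add: abs_minus_commute)
qed

lemma row_cloud_eq_image: "row_cloud X = row X ` {..<dim_row X}"
  by (auto simp: row_cloud_def)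

lemma row_cloud_mult:
  assumes "X \<in> carrier_mat n m" "V \<in> carrier_mat m k"
  shows "row_cloud (X * V) = (\<lambda>x. vec k (\<lambda>j. x \<bullet> col V j)) ` row_cloud X"
  unfolding row_cloud_eq_image image_image using assms row_mult[OF assms]
  by (intro image_cong) auto

theorem mainTheorem4:
  fixes M K N w1 w2 :: nat and f1 :: "real \<Rightarrow> real" and ts :: "real list"
    and X V :: "real mat" and lams :: "real list" and \<tau> :: real
  assumes "K \<le> M + 1"
    and "w1 > 0" and "w2 > 0"
    and "2 * pi / real w2 \<le> 2 * pi / real w1"
    and "continuous_on UNIV f1"
    and "\<forall>t. f1 (t + 2 * pi / real w1) = f1 t"
    and "\<tau> = 2 * pi / (real w2 * real (M + 1))"
    and "distinct ts" and "length ts = N"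
    and "set ts \<subseteq> {0 .. 2 * pi / real w1}"
    and "X = mat N (M + 1) (\<lambda>(i, j). f1 (ts ! i + real j * \<tau>))"
    and "inj_on (row X) {..<N}"
    and "sorted_eigenvalues (X * transpose_mat X) lams"
    and "top_right_singular_vectors X K V"
  shows "\<bar>max_pers1 eucl_dist (row_cloud X) / sqrt 3
          - max_pers1 eucl_dist (row_cloud (X * V)) / sqrt 3\<bar>
         \<le> sqrt (8 / 3) * root 4 (\<Sum>i\<in>{K..<N}. (lams ! i)^2)"
proof -
  let ?f = "\<lambda>x. vec K (\<lambda>j. x \<bullet> col V j)"
  let ?\<epsilon> = "sqrt 2 * root 4 (\<Sum>i\<in>{K..<N}. (lams ! i)^2)"
  have X: "X \<in> carrier_mat N (M + 1)" using assms(11) by simp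
  have V: "V \<in> carrier_mat (M + 1) K"
    using assms(14) X by (simp add: top_right_singular_vectors_def)
  have "\<bar>max_pers1 eucl_dist (row_cloud X) - max_pers1 eucl_dist (row_cloud (X * V))\<bar> \<le> 2 * ?\<epsilon>"
  proof (rule max_pers1_stability)
    show "finite (row_cloud X)" by (simp add: row_cloud_eq_image)
    show "?f ` row_cloud X = row_cloud (X * V)" using row_cloud_mult[OF X V] by simp
    show "0 \<le> ?\<epsilon>" by (simp add: sum_nonneg)
    show "\<forall>x\<in>row_cloud X. \<forall>y\<in>row_cloud X. \<bar>eucl_dist (?f x) (?f y) - eucl_dist x y\<bar> \<le> ?\<epsilon>"
      by (rule pca_row_cloud_distortion[OF X assms(1,13,14)])
  qed
  moreover have "sqrt (8 / 3) = 2 * sqrt 2 / sqrt 3"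
    using real_sqrt_mult[of 4 2] by (simp add: real_sqrt_divide)
  ultimately show ?thesis
    by (simp add: diff_divide_distrib[symmetric] divide_right_mono)
qed

end
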